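(* Let $F:\mathbb{R}\to\mathbb{R}$ be a real function whose graph, as a subspace of $\mathbb{R}^2$, is connected and completely metrizable. Let $S$ be the set of all $x\in\mathbb{R}$ at which $F$ is not continuous. Then $S$ is a meager subset of $\mathbb{R}$.
   Context: A real function is identified with its graph $\{(x,F(x)):x\in\mathbb{R}\}\subset\mathbb{R}^2$ with the subspace topology of the Euclidean plane. *)

theory Defs
  imports "HOL-Analysis.Analysis"
begin

definition nowhere_dense :: "'a::topological_space set \<Rightarrow> bool" where
  "nowhere_dense A \<longleftrightarrow> interior (closure A) = {}"

definition meager :: "'a::topological_space set \<Rightarrow> bool" where
  "meager S \<longleftrightarrow> (\<exists>\<F>. countable \<F> \<and> (\<forall>A\<in>\<F>. nowhere_dense A) \<and> S \<subseteq> \<Union>\<F>)"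

definition graph :: "(real \<Rightarrow> real) \<Rightarrow> (real \<times> real) set" where
  "graph F = {(x, F x) | x. True}"

end

theory Submission
  imports Defs
begin

text \<open>
  A connected graph forces the intermediate value property, so at a discontinuity x the
  closure of the graph contains a nondegenerate vertical segment over x that misses the graph.
  Being completely metrizable, the graph is a G-delta set in the plane, so its complement is a
  countable union of closed sets K; Baire's theorem on that segment puts some rational segment
  {x} \<times> [p, q] inside K \<inter> closure (graph F). The discontinuities are therefore covered by
  the countably many closed sets of abscissae over which K \<inter> closure (graph F) contains the
  whole segment from p to q, and each of them has empty interior: over an interior point the
  graph would have to pass through K.
\<close>

lemma connected_graph_uminus:
  fixes F :: "real \<Rightarrow> real"
  assumes "connected (graph F)"
  shows "connected (graph (\<lambda>x. - F x))"
proof -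
  have "graph (\<lambda>x. - F x) = (\<lambda>(x, y). (x, - y)) ` graph F"
    by (auto simp: graph_def image_def)
  moreover have "continuous_on (graph F) (\<lambda>(x, y). (x, - y))"
    by (simp add: case_prod_unfold continuous_intros)
  ultimately show ?thesis
    using connected_continuous_image assms by metis
qed

lemma connected_graph_IVT_up:
  fixes F :: "real \<Rightarrow> real"
  assumes conn: "connected (graph F)" and "u < w" "F u < c" "c < F w"
  shows "\<exists>v. u < v \<and> v < w \<and> F v = c"
proof (rule ccontr)
  assume no_value: "\<not> ?thesis"
  define A :: "(real \<times> real) set" where "A = {..<w} \<times> {..<c} \<union> {..<u} \<times> UNIV"
  define B :: "(real \<times> real) set" where "B = {u<..} \<times> {c<..} \<union> {w<..} \<times> UNIV"
  have "open A" "open B"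
    unfolding A_def B_def by (intro open_Un open_Times; simp)+
  moreover have "A \<inter> B \<inter> graph F = {}"
    using \<open>u < w\<close> by (auto simp: A_def B_def graph_def)
  moreover have "graph F \<subseteq> A \<union> B"
  proof
    fix p assume "p \<in> graph F"
    then obtain v where p: "p = (v, F v)" by (auto simp: graph_def)
    consider "v < u" | "w < v" | "u \<le> v" "v \<le> w" by linarith
    then show "p \<in> A \<union> B"
    proof cases
      case 3
      then consider "v = u" | "v = w" | "u < v" "v < w" by linarith
      then have "F v < c \<and> v < w \<or> c < F v \<and> u < v"
      proof cases
        case 3
        then have "F v \<noteq> c" using no_value by blast
        with 3 show ?thesis by linarith
      qed (use assms(2-4) in auto)
      then show ?thesis by (auto simp: p A_def B_def)
    qed (auto simp: p A_def B_def)
  qed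
  ultimately have "A \<inter> graph F = {} \<or> B \<inter> graph F = {}"
    using connectedD[OF conn] by blast
  moreover have "(u, F u) \<in> A \<inter> graph F" "(w, F w) \<in> B \<inter> graph F"
    using assms by (auto simp: A_def B_def graph_def)
  ultimately show False by blast
qed

lemma connected_graph_IVT:
  fixes F :: "real \<Rightarrow> real"
  assumes conn: "connected (graph F)"
  shows "open_segment (F u) (F w) \<subseteq> F ` open_segment u w"
proof -
  have *: "open_segment (F u) (F w) \<subseteq> F ` open_segment u w" if "u < w" for u w
  proof
    fix c assume "c \<in> open_segment (F u) (F w)"
    then consider "F u < c" "c < F w" | "- F u < - c" "- c < - F w"
      by (auto simp: open_segment_eq_real_ivl split: if_splits)
    then obtain v where "u < v" "v < w" "F v = c"
    proof cases
      case 1 then show ?thesis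
        using connected_graph_IVT_up[OF conn \<open>u < w\<close>] that by blast
    next
      case 2
      then obtain v where "u < v" "v < w" "- F v = - c"
        using connected_graph_IVT_up[OF connected_graph_uminus[OF conn] \<open>u < w\<close>] by blast
      then show ?thesis using that by simp
    qed
    then show "c \<in> F ` open_segment u w"
      by (auto simp: open_segment_eq_real_ivl)
  qed
  consider "u < w" | "w < u" | "u = w" by linarith
  then show ?thesis
    by cases (use *[of u w] *[of w u] in \<open>simp_all add: open_segment_commute\<close>)
qed

lemma closure_graph_if_frequently_crossed:
  fixes F :: "real \<Rightarrow> real"
  assumes conn: "connected (graph F)"
    and crossed: "\<exists>\<^sub>F w in at x. c \<in> open_segment (F x) (F w)"
  shows "(x, c) \<in> closure (graph F)"
  unfolding closure_approachable
proof (intro allI impI)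
  fix e :: real assume "e > 0"
  then have "\<forall>\<^sub>F w in at x. dist w x < e"
    using tendstoD[OF tendsto_ident_at] by blast
  then obtain w where "c \<in> open_segment (F x) (F w)" "dist w x < e"
    using frequently_eventually_frequently[OF crossed] by (auto dest: frequently_ex)
  moreover obtain v where "v \<in> open_segment x w" "F v = c"
    using connected_graph_IVT[OF conn] calculation(1) by blast
  ultimately have "(v, c) \<in> graph F" "dist (v, c) (x, c) < e"
    using dist_in_open_segment[of v x w] by (auto simp: graph_def dist_Pair_Pair dist_commute)
  then show "\<exists>p\<in>graph F. dist p (x, c) < e" by blast
qed

lemma discontinuity_vertical_segment_in_closure_graph:
  fixes F :: "real \<Rightarrow> real"
  assumes conn: "connected (graph F)" and "\<not> isCont F x"
  obtains a b where "a < b" "F x \<notin> {a..b}" "{x} \<times> {a..b} \<subseteq> closure (graph F)"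
proof -
  obtain e where "e > 0" and "\<exists>\<^sub>F w in at x. \<not> dist (F w) (F x) < e"
    using \<open>\<not> isCont F x\<close> by (auto simp: isCont_def tendsto_iff frequently_def)
  then have "(\<exists>\<^sub>F w in at x. F x + e \<le> F w) \<or> (\<exists>\<^sub>F w in at x. F w \<le> F x - e)"
    by (simp add: frequently_disj_iff[symmetric] dist_real_def frequently_elim1 abs_if split: if_splits)
  then show thesis
  proof
    assume up: "\<exists>\<^sub>F w in at x. F x + e \<le> F w"
    have "(x, c) \<in> closure (graph F)" if "c \<in> {F x + e/3..F x + 2*e/3}" for c
      using that \<open>e > 0\<close>
      by (intro closure_graph_if_frequently_crossed[OF conn] frequently_elim1[OF up])
        (auto simp: open_segment_eq_real_ivl)
    then show thesis
      using \<open>e > 0\<close> by (intro that[of "F x + e/3" "F x + 2*e/3"]) auto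
  next
    assume down: "\<exists>\<^sub>F w in at x. F w \<le> F x - e"
    have "(x, c) \<in> closure (graph F)" if "c \<in> {F x - 2*e/3..F x - e/3}" for c
      using that \<open>e > 0\<close>
      by (intro closure_graph_if_frequently_crossed[OF conn] frequently_elim1[OF down])
        (auto simp: open_segment_eq_real_ivl)
    then show thesis
      using \<open>e > 0\<close> by (intro that[of "F x - 2*e/3" "F x - e/3"]) auto
  qed
qed

lemma Baire_rational_subinterval:
  fixes \<G> :: "real set set"
  assumes "countable \<G>" "\<And>T. T \<in> \<G> \<Longrightarrow> closed T" "a < b" "{a..b} \<subseteq> \<Union>\<G>"
  obtains T p q where "T \<in> \<G>" "p \<in> \<rat>" "q \<in> \<rat>" "p < q" "{p..q} \<subseteq> T \<inter> {a..b}"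
proof -
  let ?\<G> = "(\<lambda>T. T \<inter> {a..b}) ` \<G>"
  have "{a<..<b} \<subseteq> interior (\<Union>?\<G>)"
    using assms(4) by (intro interior_maximal) auto
  then have "euclidean interior_of \<Union>?\<G> \<noteq> {}"
    using \<open>a < b\<close> by (metis euclidean_interior_of greaterThanLessThan_empty_iff leD subset_empty)
  then have "\<exists>T\<in>?\<G>. interior T \<noteq> {}"
    using Baire_category_alt[of euclidean ?\<G>] assms(1,2)
    by (auto simp: completely_metrizable_space_euclidean closed_Int simp del: interior_Int)
  then obtain T where "T \<in> \<G>" "interior (T \<inter> {a..b}) \<noteq> {}"
    by blast
  then obtain m r where "r > 0" "ball m r \<subseteq> T \<inter> {a..b}"
    by (meson equals0I mem_interior)
  moreover obtain p q where "p \<in> \<rat>" "q \<in> \<rat>" "m - r < p" "p < m" "m < q" "q < m + r"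
    using Rats_dense_in_real[of "m - r" m] Rats_dense_in_real[of m "m + r"] \<open>r > 0\<close> by auto
  moreover have "{p..q} \<subseteq> ball m r"
    using calculation by (auto simp: dist_real_def)
  ultimately show thesis
    using that[of T p q] \<open>T \<in> \<G>\<close> by (meson order.strict_trans subset_trans)
qed

lemma completely_metrizable_complement_closed_Union:
  fixes S :: "'a::metric_space set"
  assumes "completely_metrizable_space (top_of_set S)"
  obtains \<K> where "countable \<K>" "\<And>K. K \<in> \<K> \<Longrightarrow> closed K" "\<Union>\<K> = - S"
proof -
  have "gdelta_in euclidean S"
    using completely_metrizable_space_imp_gdelta_in[OF metrizable_space_euclidean, of S] assms
    by simp
  then obtain \<U> where "countable \<U>" "\<And>U. U \<in> \<U> \<Longrightarrow> open U" "\<Inter>\<U> = S"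
    by (auto simp: gdelta_in_alt intersection_of_def)
  then show thesis
    by (intro that[of "uminus ` \<U>"]) auto
qed

definition full_columns :: "(real \<times> real) set \<Rightarrow> real \<Rightarrow> real \<Rightarrow> real set" where
  "full_columns C a b = {x. {x} \<times> {a..b} \<subseteq> C}"

lemma closed_full_columns:
  assumes "closed C"
  shows "closed (full_columns C a b)"
proof -
  have "full_columns C a b = (\<Inter>y\<in>{a..b}. (\<lambda>x. (x, y)) -` C)"
    by (auto simp: full_columns_def)
  moreover have "closed ((\<lambda>x. (x, y)) -` C)" for y
    by (intro continuous_closed_vimage[OF assms] continuous_intros)
  ultimately show ?thesis
    by (auto intro: closed_INT)
qed

lemma interior_full_columns_off_graph:
  fixes F :: "real \<Rightarrow> real"
  assumes off_graph: "C \<subseteq> closure (graph F) - graph F" and "a < b"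
  shows "interior (full_columns C a b) = {}"
proof (rule ccontr)
  assume "interior (full_columns C a b) \<noteq> {}"
  then obtain c e where "e > 0" and ball: "ball c e \<subseteq> full_columns C a b"
    by (meson equals0I mem_interior)
  define m where "m = (a + b) / 2"
  have "c \<in> full_columns C a b"
    using ball \<open>e > 0\<close> centre_in_ball by blast
  moreover have "m \<in> {a..b}"
    using \<open>a < b\<close> by (simp add: m_def)
  ultimately have "(c, m) \<in> C"
    by (auto simp: full_columns_def)
  then have "(c, m) \<in> closure (graph F)"
    using off_graph by blast
  moreover have "min e ((b - a) / 2) > 0"
    using \<open>e > 0\<close> \<open>a < b\<close> by simp
  ultimately obtain g where "g \<in> graph F" "dist g (c, m) < min e ((b - a) / 2)"
    using closure_approachable by meson
  then obtain x where x: "dist (x, F x) (c, m) < min e ((b - a) / 2)"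
    by (auto simp: graph_def)
  then have "dist x c < e" "\<bar>F x - m\<bar> < (b - a) / 2"
    using dist_fst_le[of "(x, F x)" "(c, m)"] dist_snd_le[of "(x, F x)" "(c, m)"]
    by (auto simp: dist_real_def)
  then have "x \<in> ball c e" "F x \<in> {a..b}"
    by (auto simp: dist_commute m_def abs_less_iff field_simps)
  then have "(x, F x) \<in> C"
    using ball unfolding full_columns_def by blast
  then show False
    using off_graph by (auto simp: graph_def)
qed

lemma discontinuity_in_full_columns:
  fixes F :: "real \<Rightarrow> real"
  assumes conn: "connected (graph F)" and "countable \<K>" and closed: "\<And>K. K \<in> \<K> \<Longrightarrow> closed K"
    and cover: "\<Union>\<K> = - graph F" and "\<not> isCont F x"
  obtains K p q where "K \<in> \<K>" "p \<in> \<rat>" "q \<in> \<rat>" "p < q"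
    "x \<in> full_columns (K \<inter> closure (graph F)) p q"
proof -
  obtain a b where "a < b" "F x \<notin> {a..b}" and segment: "{x} \<times> {a..b} \<subseteq> closure (graph F)"
    using discontinuity_vertical_segment_in_closure_graph[OF conn \<open>\<not> isCont F x\<close>] .
  let ?\<G> = "(\<lambda>K. Pair x -` K) ` \<K>"
  have "closed (Pair x -` K)" if "K \<in> \<K>" for K
    by (intro continuous_closed_vimage[OF closed[OF that]] continuous_intros)
  then have closed_fibres: "\<And>T. T \<in> ?\<G> \<Longrightarrow> closed T"
    by blast
  have fibres_cover: "{a..b} \<subseteq> \<Union>?\<G>"
  proof
    fix y assume "y \<in> {a..b}"
    then have "(x, y) \<in> \<Union>\<K>"
      using \<open>F x \<notin> {a..b}\<close> cover by (auto simp: graph_def)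
    then show "y \<in> \<Union>?\<G>" by blast
  qed
  obtain T p q where "T \<in> ?\<G>" "p \<in> \<rat>" "q \<in> \<rat>" "p < q" "{p..q} \<subseteq> T \<inter> {a..b}"
    using Baire_rational_subinterval[OF countable_image[OF \<open>countable \<K>\<close>] closed_fibres \<open>a < b\<close> fibres_cover] .
  then obtain K where "K \<in> \<K>" "p \<in> \<rat>" "q \<in> \<rat>" "p < q" "{p..q} \<subseteq> Pair x -` K \<inter> {a..b}"
    by blast
  then show thesis
    using segment by (intro that[of K p q]) (auto simp: full_columns_def)
qed

theorem theorem2:
  fixes F :: "real \<Rightarrow> real"
  assumes "connected (graph F)"
    and "completely_metrizable_space (top_of_set (graph F))"
  shows "meager {x. \<not> isCont F x}"
proof -
  obtain \<K> where "countable \<K>" and closed: "\<And>K. K \<in> \<K> \<Longrightarrow> closed K"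
    and cover: "\<Union>\<K> = - graph F"
    using completely_metrizable_complement_closed_Union[OF assms(2)] by blast
  define I where "I = \<K> \<times> {(p :: real, q). p \<in> \<rat> \<and> q \<in> \<rat> \<and> p < q}"
  define \<X> where "\<X> = (\<lambda>(K, p, q). full_columns (K \<inter> closure (graph F)) p q) ` I"
  have "countable I"
    unfolding I_def using \<open>countable \<K>\<close>
    by (intro countable_SIGMA countable_subset[OF _ countable_SIGMA[OF countable_rat countable_rat]]) auto
  then have "countable \<X>"
    by (simp add: \<X>_def)
  moreover have "nowhere_dense X" if "X \<in> \<X>" for X
  proof -
    obtain K p q where "K \<in> \<K>" "p < q" and X: "X = full_columns (K \<inter> closure (graph F)) p q"
      using \<open>X \<in> \<X>\<close> by (auto simp: \<X>_def I_def)
    have "closed X"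
      unfolding X by (intro closed_full_columns closed_Int closed[OF \<open>K \<in> \<K>\<close>] closed_closure)
    moreover have "K \<inter> closure (graph F) \<subseteq> closure (graph F) - graph F"
      using cover \<open>K \<in> \<K>\<close> by blast
    then have "interior X = {}"
      unfolding X using \<open>p < q\<close> by (rule interior_full_columns_off_graph)
    ultimately show ?thesis
      by (simp add: nowhere_dense_def closure_closed)
  qed
  moreover have "{x. \<not> isCont F x} \<subseteq> \<Union>\<X>"
  proof
    fix x assume "x \<in> {x. \<not> isCont F x}"
    then obtain K p q where "K \<in> \<K>" "p \<in> \<rat>" "q \<in> \<rat>" "p < q"
      and "x \<in> full_columns (K \<inter> closure (graph F)) p q"
      using discontinuity_in_full_columns[OF assms(1) \<open>countable \<K>\<close> closed cover] by blast
    moreover have "(K, p, q) \<in> I"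
      using calculation by (simp add: I_def)
    ultimately show "x \<in> \<Union>\<X>"
      unfolding \<X>_def by (intro UnionI[OF rev_image_eqI]) auto
  qed
  ultimately show ?thesis
    unfolding meager_def by blast
qed

end
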